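(* For any Markov policy $\pi$ and every $h\in[H]$ (for claim 3, $h\ge1$): (1) $\bar d^\pi_h\le d^\pi_h$ pointwise. (2) If for all $h'<h$ we have $d^\pi_{h'}\le C^{\mathbf x}_{h'}d^D_{h'}$ and $\pi_{h'}\le C^{\mathbf a}_{h'}\pi^D_{h'}$ pointwise, then $\bar d^\pi_h=d^\pi_h$. (3) $\|\bar d^\pi_h-d^\pi_h\|_1\le\|\bar d^\pi_{h-1}-d^\pi_{h-1}\|_1+\|\bar d^\pi_{h-1}-\bar d^\pi_{h-1}\wedge C^{\mathbf x}_{h-1}d^D_{h-1}\|_1+\|\mathbf P^\pi_{h-1}d^\pi_{h-1}-\mathbf P^{\bar\pi}_{h-1}d^\pi_{h-1}\|_1$.
   Context: Setting: finite-horizon episodic MDP with measurable state space $\mathcal X$, finite action space $\mathcal A$, $[H]=\{0,\dots,H-1\}$, transition densities $P_h(\cdot\mid x,a)$, initial distribution $d_0$; $d^\pi_h$ is the density of $x_h$ under the Markov policy $\pi=(\pi_h)$. Offline data: for each $h$, $\mathcal D_h$ consists of i.i.d. tuples $(x_h,a_h,x_{h+1})$ (conditionally on earlier data) generated by an arbitrary (possibly history-dependent) roll-in policy to $x_h$, then $a_h\sim\pi^D_h(\cdot\mid x_h)$ for a Markov single-step policy $\pi^D_h$, then $x_{h+1}\sim P_h$; $d^D_h$ is the marginal density of $x_h$ in $\mathcal D_h$. Notation: $a\wedge b=\min(a,b)$ pointwise; for $d:\mathcal X\to\mathbb R$ and nonnegative $\pi_h(a\mid x)$, $(\mathbf P^\pi_hd)(x'):=\iint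 P_h(x'\mid x,a)\pi_h(a\mid x)d(x)\mathrm dx\,\mathrm da$. Recursively clipped occupancy: given thresholds $C^{\mathbf x}_h,C^{\mathbf a}_h>0$, the pseudo-policy $\bar\pi_h:=\pi_h\wedge C^{\mathbf a}_h\pi^D_h$, $\bar d^\pi_0:=d_0$, and $\bar d^\pi_h:=\mathbf P^{\bar\pi}_{h-1}(\bar d^\pi_{h-1}\wedge C^{\mathbf x}_{h-1}d^D_{h-1})$ for $h\ge1$. *)

theory Defs
  imports "HOL-Analysis.Analysis"
begin

text \<open>Densities are nonnegative extended reals (ennreal) with respect to a reference
  measure M on the state space; the (finite) action space A carries counting measure,
  so the integral over actions is a finite sum.
  Convention: P h x a x' is the transition density P_h(x' | x, a); pol h x a is pi_h(a | x).\<close>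

definition Pop :: "'x measure \<Rightarrow> 'a set \<Rightarrow> (nat \<Rightarrow> 'x \<Rightarrow> 'a \<Rightarrow> 'x \<Rightarrow> ennreal)
    \<Rightarrow> nat \<Rightarrow> ('x \<Rightarrow> 'a \<Rightarrow> ennreal) \<Rightarrow> ('x \<Rightarrow> ennreal) \<Rightarrow> 'x \<Rightarrow> ennreal" where
  "Pop M A P h pol d x' = (\<integral>\<^sup>+ x. (\<Sum>a\<in>A. P h x a x' * pol x a * d x) \<partial>M)"

primrec occ :: "'x measure \<Rightarrow> 'a set \<Rightarrow> (nat \<Rightarrow> 'x \<Rightarrow> 'a \<Rightarrow> 'x \<Rightarrow> ennreal)
    \<Rightarrow> ('x \<Rightarrow> ennreal) \<Rightarrow> (nat \<Rightarrow> 'x \<Rightarrow> 'a \<Rightarrow> ennreal) \<Rightarrow> nat \<Rightarrow> 'x \<Rightarrow> ennreal" where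
  "occ M A P d0 pol 0 = d0"
| "occ M A P d0 pol (Suc h) = Pop M A P h (pol h) (occ M A P d0 pol h)"

definition clip_pol :: "(nat \<Rightarrow> 'x \<Rightarrow> 'a \<Rightarrow> ennreal) \<Rightarrow> (nat \<Rightarrow> 'x \<Rightarrow> 'a \<Rightarrow> ennreal)
    \<Rightarrow> (nat \<Rightarrow> real) \<Rightarrow> nat \<Rightarrow> 'x \<Rightarrow> 'a \<Rightarrow> ennreal" where
  "clip_pol pol polD Ca h x a = min (pol h x a) (ennreal (Ca h) * polD h x a)"

primrec clip_occ :: "'x measure \<Rightarrow> 'a set \<Rightarrow> (nat \<Rightarrow> 'x \<Rightarrow> 'a \<Rightarrow> 'x \<Rightarrow> ennreal)
    \<Rightarrow> ('x \<Rightarrow> ennreal) \<Rightarrow> (nat \<Rightarrow> 'x \<Rightarrow> 'a \<Rightarrow> ennreal) \<Rightarrow> (nat \<Rightarrow> 'x \<Rightarrow> 'a \<Rightarrow> ennreal)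
    \<Rightarrow> (nat \<Rightarrow> 'x \<Rightarrow> ennreal) \<Rightarrow> (nat \<Rightarrow> real) \<Rightarrow> (nat \<Rightarrow> real) \<Rightarrow> nat \<Rightarrow> 'x \<Rightarrow> ennreal" where
  "clip_occ M A P d0 pol polD dD Cx Ca 0 = d0"
| "clip_occ M A P d0 pol polD dD Cx Ca (Suc h) =
     Pop M A P h (clip_pol pol polD Ca h)
       (\<lambda>x. min (clip_occ M A P d0 pol polD dD Cx Ca h x) (ennreal (Cx h) * dD h x))"

text \<open>Absolute difference of extended nonnegative reals (equals |a - b| for finite values)
  and the L1 distance w.r.t. M.\<close>
definition eabsdiff :: "ennreal \<Rightarrow> ennreal \<Rightarrow> ennreal" where
  "eabsdiff a b = (a - b) + (b - a)"

definition L1dist :: "'x measure \<Rightarrow> ('x \<Rightarrow> ennreal) \<Rightarrow> ('x \<Rightarrow> ennreal) \<Rightarrow> ennreal" where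
  "L1dist M f g = (\<integral>\<^sup>+ x. eabsdiff (f x) (g x) \<partial>M)"

end

theory Submission
  imports Defs
begin

(* Both occupancies are pushed forward by the same transition kernel, and clipping the state
   density or the policy only removes mass; this gives (1) by induction, and under the
   coverage hypotheses the clips are inactive, which gives (2).  For (3) pass through the
   intermediate density K = P^{bar pi}_{h-1} d^pi_{h-1}.  Its distance to d^pi_h is the last
   term.  Since bar pi is sub-stochastic, P^{bar pi} is an L1 contraction, so the distance from
   bar d^pi_h to K is at most that of min(bar d^pi_{h-1}, C^x d^D_{h-1}) to d^pi_{h-1}, and the
   triangle inequality through bar d^pi_{h-1} splits this into the first two terms. *)

lemma eabsdiff_commute: "eabsdiff a b = eabsdiff b a"
  by (simp add: eabsdiff_def add.commute)

lemma eabsdiff_top [simp]: "eabsdiff top b = top" "eabsdiff a top = top"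
  by (simp_all add: eabsdiff_def)

lemma eabsdiff_ennreal:
  "0 \<le> r \<Longrightarrow> 0 \<le> s \<Longrightarrow> eabsdiff (ennreal r) (ennreal s) = ennreal \<bar>r - s\<bar>"
  by (cases "r \<le> s") (simp_all add: eabsdiff_def ennreal_minus ennreal_neg)

lemma eabsdiff_triangle: "eabsdiff a c \<le> eabsdiff a b + eabsdiff b c"
  by (cases a; cases b; cases c) (auto simp: eabsdiff_ennreal simp flip: ennreal_plus intro!: ennreal_leI)

lemma eabsdiff_le_add:
  assumes "a \<le> b + c" "b \<le> a + d" "a \<noteq> \<infinity>" "b \<noteq> \<infinity>"
  shows "eabsdiff a b \<le> c + d"
  unfolding eabsdiff_def using assms by (intro add_mono) (auto simp: ennreal_minus_le_iff)

lemma borel_measurable_eabsdiff [measurable]: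
  assumes "f \<in> borel_measurable M" "g \<in> borel_measurable M"
  shows "(\<lambda>x. eabsdiff (f x) (g x)) \<in> borel_measurable M"
  unfolding eabsdiff_def using assms by measurable

lemma L1dist_commute: "L1dist M f g = L1dist M g f"
  unfolding L1dist_def by (simp add: eabsdiff_commute)

lemma L1dist_triangle:
  assumes "f \<in> borel_measurable M" "g \<in> borel_measurable M" "k \<in> borel_measurable M"
  shows "L1dist M f k \<le> L1dist M f g + L1dist M g k"
proof -
  have "L1dist M f k \<le> (\<integral>\<^sup>+ x. eabsdiff (f x) (g x) + eabsdiff (g x) (k x) \<partial>M)"
    unfolding L1dist_def by (intro nn_integral_mono eabsdiff_triangle)
  also have "\<dots> = L1dist M f g + L1dist M g k"
    unfolding L1dist_def by (intro nn_integral_add borel_measurable_eabsdiff assms)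
  finally show ?thesis .
qed

lemma Pop_mono:
  assumes "\<And>x a. x \<in> space M \<Longrightarrow> a \<in> A \<Longrightarrow> q x a \<le> q' x a"
    and "\<And>x. x \<in> space M \<Longrightarrow> e x \<le> e' x"
  shows "Pop M A P h q e y \<le> Pop M A P h q' e' y"
  unfolding Pop_def using assms by (intro nn_integral_mono sum_mono mult_mono) auto

lemma Pop_cong:
  assumes "\<And>x a. x \<in> space M \<Longrightarrow> a \<in> A \<Longrightarrow> q x a = q' x a"
    and "\<And>x. x \<in> space M \<Longrightarrow> e x = e' x"
  shows "Pop M A P h q e y = Pop M A P h q' e' y"
  unfolding Pop_def using assms by (intro nn_integral_cong sum.cong) auto

lemma clip_occ_le_occ: "clip_occ M A P d0 pol polD dD Cx Ca h x \<le> occ M A P d0 pol h x"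
proof (induction h arbitrary: x)
  case 0
  show ?case by simp
next
  case (Suc h)
  show ?case
    by (simp, rule Pop_mono) (auto simp: clip_pol_def intro: min.coboundedI1 Suc.IH)
qed

lemma clip_occ_eq_occ:
  assumes "\<And>h' x. h' < h \<Longrightarrow> x \<in> space M \<Longrightarrow> occ M A P d0 pol h' x \<le> ennreal (Cx h') * dD h' x"
    and "\<And>h' x a. h' < h \<Longrightarrow> x \<in> space M \<Longrightarrow> a \<in> A \<Longrightarrow> pol h' x a \<le> ennreal (Ca h') * polD h' x a"
  shows "clip_occ M A P d0 pol polD dD Cx Ca h x = occ M A P d0 pol h x"
  using assms
proof (induction h arbitrary: x)
  case 0
  show ?case by simp
next
  case (Suc h)
  have "clip_occ M A P d0 pol polD dD Cx Ca h y = occ M A P d0 pol h y" for y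
    using Suc.prems by (intro Suc.IH) auto
  then show ?case
    using Suc.prems by (simp, intro Pop_cong) (auto simp: clip_pol_def min_absorb1)
qed

locale transition_density =
  fixes M :: "'x measure" and A :: "'a set" and P :: "nat \<Rightarrow> 'x \<Rightarrow> 'a \<Rightarrow> 'x \<Rightarrow> ennreal"
  assumes sigma_finite: "sigma_finite_measure M"
    and P_measurable: "\<And>h a. a \<in> A \<Longrightarrow> (\<lambda>(x, x'). P h x a x') \<in> borel_measurable (M \<Otimes>\<^sub>M M)"
    and P_stochastic: "\<And>h x a. x \<in> space M \<Longrightarrow> a \<in> A \<Longrightarrow> (\<integral>\<^sup>+ x'. P h x a x' \<partial>M) = 1"
begin

lemma measurable_Pop_integrand:
  assumes "\<And>a. a \<in> A \<Longrightarrow> (\<lambda>x. q x a) \<in> borel_measurable M" and "e \<in> borel_measurable M"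
  shows "(\<lambda>(x, x'). \<Sum>a\<in>A. P h x a x' * q x a * e x) \<in> borel_measurable (M \<Otimes>\<^sub>M M)"
proof -
  have "(\<lambda>p. P h (fst p) a (snd p) * q (fst p) a * e (fst p)) \<in> borel_measurable (M \<Otimes>\<^sub>M M)"
    if a: "a \<in> A" for a
  proof -
    have "(\<lambda>p. P h (fst p) a (snd p)) \<in> borel_measurable (M \<Otimes>\<^sub>M M)"
      using P_measurable[OF a] by (simp add: case_prod_beta')
    then show ?thesis
      using assms(1)[OF a] assms(2) by measurable
  qed
  then show ?thesis
    by (simp add: case_prod_beta' borel_measurable_sum)
qed

lemma measurable_Pop:
  assumes "\<And>a. a \<in> A \<Longrightarrow> (\<lambda>x. q x a) \<in> borel_measurable M" and "e \<in> borel_measurable M"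
  shows "Pop M A P h q e \<in> borel_measurable M"
proof -
  have "(\<lambda>(x', x). \<Sum>a\<in>A. P h x a x' * q x a * e x) \<in> borel_measurable (M \<Otimes>\<^sub>M M)"
    using measurable_compose[OF measurable_pair_swap' measurable_Pop_integrand[OF assms]]
    by (simp add: case_prod_beta')
  from sigma_finite_measure.borel_measurable_nn_integral[OF sigma_finite this]
  show ?thesis
    unfolding Pop_def[abs_def] by simp
qed

lemma Pop_add:
  assumes "\<And>a. a \<in> A \<Longrightarrow> (\<lambda>x. q x a) \<in> borel_measurable M"
    and "f \<in> borel_measurable M" "g \<in> borel_measurable M" and y: "y \<in> space M"
  shows "Pop M A P h q (\<lambda>x. f x + g x) y = Pop M A P h q f y + Pop M A P h q g y"
proof -
  have "(\<lambda>x. P h x a y * q x a * u x) \<in> borel_measurable M"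
    if a: "a \<in> A" and u: "u \<in> borel_measurable M" for a u
  proof -
    have "(\<lambda>x. P h x a y) \<in> borel_measurable M"
      using measurable_compose[OF measurable_Pair2'[OF y] P_measurable[OF a]] by simp
    then show ?thesis
      using assms(1)[OF a] u by measurable
  qed
  then show ?thesis
    unfolding Pop_def using assms(2,3)
    by (simp add: distrib_left sum.distrib nn_integral_add borel_measurable_sum)
qed

lemma nn_integral_Pop:
  assumes "\<And>a. a \<in> A \<Longrightarrow> (\<lambda>x. q x a) \<in> borel_measurable M" and "e \<in> borel_measurable M"
  shows "(\<integral>\<^sup>+ x'. Pop M A P h q e x' \<partial>M) = (\<integral>\<^sup>+ x. (\<Sum>a\<in>A. q x a) * e x \<partial>M)"
proof -
  interpret pair_sigma_finite M M
    using sigma_finite by (simp add: pair_sigma_finite_def)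
  have "(\<integral>\<^sup>+ x'. Pop M A P h q e x' \<partial>M)
      = (\<integral>\<^sup>+ x. (\<integral>\<^sup>+ x'. (\<Sum>a\<in>A. P h x a x' * q x a * e x) \<partial>M) \<partial>M)"
    unfolding Pop_def by (rule Fubini'[OF measurable_Pop_integrand[OF assms]])
  also have "\<dots> = (\<integral>\<^sup>+ x. (\<Sum>a\<in>A. q x a) * e x \<partial>M)"
  proof (rule nn_integral_cong)
    fix x assume x: "x \<in> space M"
    have P_x: "(\<lambda>x'. P h x a x') \<in> borel_measurable M" if a: "a \<in> A" for a
      using measurable_compose[OF measurable_Pair1'[OF x] P_measurable[OF a]] by simp
    have "(\<integral>\<^sup>+ x'. (\<Sum>a\<in>A. P h x a x' * q x a * e x) \<partial>M)
        = (\<Sum>a\<in>A. (\<integral>\<^sup>+ x'. P h x a x' \<partial>M) * (q x a * e x))"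
      using P_x by (simp add: nn_integral_sum mult.assoc nn_integral_multc)
    also have "\<dots> = (\<Sum>a\<in>A. q x a) * e x"
      using P_stochastic[OF x] by (simp add: sum_distrib_right)
    finally show "(\<integral>\<^sup>+ x'. (\<Sum>a\<in>A. P h x a x' * q x a * e x) \<partial>M) = (\<Sum>a\<in>A. q x a) * e x" .
  qed
  finally show ?thesis .
qed

lemma nn_integral_Pop_le:
  assumes "\<And>a. a \<in> A \<Longrightarrow> (\<lambda>x. q x a) \<in> borel_measurable M" and "e \<in> borel_measurable M"
    and "\<And>x. x \<in> space M \<Longrightarrow> (\<Sum>a\<in>A. q x a) \<le> 1"
  shows "(\<integral>\<^sup>+ x'. Pop M A P h q e x' \<partial>M) \<le> (\<integral>\<^sup>+ x. e x \<partial>M)"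
proof -
  have "(\<integral>\<^sup>+ x'. Pop M A P h q e x' \<partial>M) = (\<integral>\<^sup>+ x. (\<Sum>a\<in>A. q x a) * e x \<partial>M)"
    by (rule nn_integral_Pop[OF assms(1,2)])
  also have "\<dots> \<le> (\<integral>\<^sup>+ x. e x \<partial>M)"
    by (rule nn_integral_mono) (use mult_right_mono[OF assms(3)] in fastforce)
  finally show ?thesis .
qed

lemma Pop_eabsdiff_le:
  assumes q: "\<And>a. a \<in> A \<Longrightarrow> (\<lambda>x. q x a) \<in> borel_measurable M"
    and f: "f \<in> borel_measurable M" and g: "g \<in> borel_measurable M" and y: "y \<in> space M"
    and "Pop M A P h q f y \<noteq> \<infinity>" "Pop M A P h q g y \<noteq> \<infinity>"
  shows "eabsdiff (Pop M A P h q f y) (Pop M A P h q g y) \<le> Pop M A P h q (\<lambda>x. eabsdiff (f x) (g x)) y"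
proof -
  have le_add_diff: "Pop M A P h q u y \<le> Pop M A P h q v y + Pop M A P h q (\<lambda>x. u x - v x) y"
    if "u \<in> borel_measurable M" "v \<in> borel_measurable M" for u v
  proof -
    have "Pop M A P h q u y \<le> Pop M A P h q (\<lambda>x. v x + (u x - v x)) y"
      by (rule Pop_mono) (auto simp: add_diff_self_ennreal)
    also have "\<dots> = Pop M A P h q v y + Pop M A P h q (\<lambda>x. u x - v x) y"
      by (intro Pop_add q y) (use that in measurable)
    finally show ?thesis .
  qed
  have "eabsdiff (Pop M A P h q f y) (Pop M A P h q g y)
      \<le> Pop M A P h q (\<lambda>x. f x - g x) y + Pop M A P h q (\<lambda>x. g x - f x) y"
    using le_add_diff[OF f g] le_add_diff[OF g f] assms(5,6) by (rule eabsdiff_le_add)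
  also have "\<dots> = Pop M A P h q (\<lambda>x. eabsdiff (f x) (g x)) y"
    unfolding eabsdiff_def by (intro Pop_add[symmetric] q y) (use f g in measurable)
  finally show ?thesis .
qed

text \<open>On extended reals the pointwise contraction needs finite values; integrability of
  \<open>f\<close> and \<open>g\<close> makes both images finite almost everywhere.\<close>

lemma L1dist_Pop_le:
  assumes q: "\<And>a. a \<in> A \<Longrightarrow> (\<lambda>x. q x a) \<in> borel_measurable M"
    and q_le: "\<And>x. x \<in> space M \<Longrightarrow> (\<Sum>a\<in>A. q x a) \<le> 1"
    and f: "f \<in> borel_measurable M" "(\<integral>\<^sup>+ x. f x \<partial>M) \<noteq> \<infinity>"
    and g: "g \<in> borel_measurable M" "(\<integral>\<^sup>+ x. g x \<partial>M) \<noteq> \<infinity>"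
  shows "L1dist M (Pop M A P h q f) (Pop M A P h q g) \<le> L1dist M f g"
proof -
  have finite_ae: "AE y in M. Pop M A P h q u y \<noteq> \<infinity>"
    if "u \<in> borel_measurable M" "(\<integral>\<^sup>+ x. u x \<partial>M) \<noteq> \<infinity>" for u
    using that nn_integral_Pop_le[OF q that(1) q_le, of h]
    by (intro nn_integral_noteq_infinite measurable_Pop q) (auto simp: top_unique)
  have "L1dist M (Pop M A P h q f) (Pop M A P h q g)
      \<le> (\<integral>\<^sup>+ y. Pop M A P h q (\<lambda>x. eabsdiff (f x) (g x)) y \<partial>M)"
    unfolding L1dist_def using finite_ae[OF f] finite_ae[OF g] AE_space
    by (intro nn_integral_mono_AE, eventually_elim) (rule Pop_eabsdiff_le[OF q f(1) g(1)])
  also have "\<dots> \<le> L1dist M f g"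
    unfolding L1dist_def using f g by (intro nn_integral_Pop_le q q_le) measurable
  finally show ?thesis .
qed

end

locale clipped_occupancy = transition_density M A P
  for M :: "'x measure" and A :: "'a set" and P :: "nat \<Rightarrow> 'x \<Rightarrow> 'a \<Rightarrow> 'x \<Rightarrow> ennreal" +
  fixes d0 :: "'x \<Rightarrow> ennreal" and pol polD :: "nat \<Rightarrow> 'x \<Rightarrow> 'a \<Rightarrow> ennreal"
    and dD :: "nat \<Rightarrow> 'x \<Rightarrow> ennreal" and Cx Ca :: "nat \<Rightarrow> real"
  assumes d0_measurable: "d0 \<in> borel_measurable M"
    and d0_finite: "(\<integral>\<^sup>+ x. d0 x \<partial>M) \<noteq> \<infinity>"
    and pol_measurable: "\<And>h a. a \<in> A \<Longrightarrow> (\<lambda>x. pol h x a) \<in> borel_measurable M"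
    and pol_substochastic: "\<And>h x. x \<in> space M \<Longrightarrow> (\<Sum>a\<in>A. pol h x a) \<le> 1"
    and polD_measurable: "\<And>h a. a \<in> A \<Longrightarrow> (\<lambda>x. polD h x a) \<in> borel_measurable M"
    and dD_measurable: "\<And>h. dD h \<in> borel_measurable M"
begin

abbreviation occupancy :: "nat \<Rightarrow> 'x \<Rightarrow> ennreal" where
  "occupancy \<equiv> occ M A P d0 pol"

abbreviation clipped :: "nat \<Rightarrow> 'x \<Rightarrow> ennreal" where
  "clipped \<equiv> clip_occ M A P d0 pol polD dD Cx Ca"

abbreviation clipped_state :: "nat \<Rightarrow> 'x \<Rightarrow> ennreal" where
  "clipped_state h x \<equiv> min (clipped h x) (ennreal (Cx h) * dD h x)"

lemma measurable_clip_pol: "a \<in> A \<Longrightarrow> (\<lambda>x. clip_pol pol polD Ca h x a) \<in> borel_measurable M"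
  unfolding clip_pol_def using pol_measurable polD_measurable by measurable

lemma sum_clip_pol_le: "x \<in> space M \<Longrightarrow> (\<Sum>a\<in>A. clip_pol pol polD Ca h x a) \<le> 1"
  by (rule order.trans[OF sum_mono pol_substochastic[of x h]]) (auto simp: clip_pol_def)

lemma measurable_occupancy: "occupancy h \<in> borel_measurable M"
  by (induction h) (auto intro: measurable_Pop pol_measurable d0_measurable)

lemma measurable_clipped: "clipped h \<in> borel_measurable M"
proof (induction h)
  case 0
  show ?case using d0_measurable by simp
next
  case (Suc h)
  then show ?case
    using dD_measurable[of h] by (simp, intro measurable_Pop measurable_clip_pol) measurable
qed

lemma measurable_clipped_state: "clipped_state h \<in> borel_measurable M"
  using measurable_clipped[of h] dD_measurable[of h] by measurable

lemma nn_integral_occupancy_le: "(\<integral>\<^sup>+ x. occupancy h x \<partial>M) \<le> (\<integral>\<^sup>+ x. d0 x \<partial>M)"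
proof (induction h)
  case 0
  show ?case by simp
next
  case (Suc h)
  have "(\<integral>\<^sup>+ x. occupancy (Suc h) x \<partial>M) \<le> (\<integral>\<^sup>+ x. occupancy h x \<partial>M)"
    by (simp, intro nn_integral_Pop_le pol_measurable measurable_occupancy pol_substochastic)
  then show ?case
    using Suc.IH by (rule order.trans)
qed

lemma nn_integral_occupancy_finite: "(\<integral>\<^sup>+ x. occupancy h x \<partial>M) \<noteq> \<infinity>"
  using nn_integral_occupancy_le[of h] d0_finite by (auto simp: top_unique)

lemma L1dist_clipped_Suc_le:
  "L1dist M (clipped (Suc h)) (occupancy (Suc h))
    \<le> L1dist M (clipped h) (occupancy h) + L1dist M (clipped h) (clipped_state h)
      + L1dist M (Pop M A P h (pol h) (occupancy h)) (Pop M A P h (clip_pol pol polD Ca h) (occupancy h))"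
proof -
  let ?K = "Pop M A P h (clip_pol pol polD Ca h) (occupancy h)"
  have K_measurable: "?K \<in> borel_measurable M"
    by (intro measurable_Pop measurable_clip_pol measurable_occupancy)
  have "(\<integral>\<^sup>+ x. clipped_state h x \<partial>M) \<le> (\<integral>\<^sup>+ x. occupancy h x \<partial>M)"
    by (intro nn_integral_mono min.coboundedI1 clip_occ_le_occ)
  then have state_finite: "(\<integral>\<^sup>+ x. clipped_state h x \<partial>M) \<noteq> \<infinity>"
    using nn_integral_occupancy_finite[of h] by (auto simp: top_unique)
  have contraction: "L1dist M (clipped (Suc h)) ?K \<le> L1dist M (clipped_state h) (occupancy h)"
    by (simp, intro L1dist_Pop_le measurable_clip_pol sum_clip_pol_le measurable_clipped_state
        measurable_occupancy state_finite nn_integral_occupancy_finite)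
  have "L1dist M (clipped (Suc h)) (occupancy (Suc h))
      \<le> L1dist M (clipped (Suc h)) ?K + L1dist M ?K (occupancy (Suc h))"
    by (rule L1dist_triangle[OF measurable_clipped K_measurable measurable_occupancy])
  also have "\<dots> \<le> L1dist M (clipped_state h) (occupancy h)
      + L1dist M (Pop M A P h (pol h) (occupancy h)) ?K"
    using contraction by (simp add: L1dist_commute)
  also have "\<dots> \<le> (L1dist M (clipped h) (clipped_state h) + L1dist M (clipped h) (occupancy h))
      + L1dist M (Pop M A P h (pol h) (occupancy h)) ?K"
    using L1dist_triangle[OF measurable_clipped_state measurable_clipped measurable_occupancy]
    by (intro add_right_mono) (simp add: L1dist_commute)
  finally show ?thesis
    by (simp add: ac_simps)
qed

end

theorem proposition2:
  fixes M :: "'x measure" and A :: "'a set" and H :: nat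
    and P :: "nat \<Rightarrow> 'x \<Rightarrow> 'a \<Rightarrow> 'x \<Rightarrow> ennreal"
    and d0 :: "'x \<Rightarrow> ennreal"
    and pol polD :: "nat \<Rightarrow> 'x \<Rightarrow> 'a \<Rightarrow> ennreal"
    and dD :: "nat \<Rightarrow> 'x \<Rightarrow> ennreal"
    and Cx Ca :: "nat \<Rightarrow> real"
  assumes M: "sigma_finite_measure M"
    and A: "finite A" "A \<noteq> {}"
    and P_meas: "\<And>h a. a \<in> A \<Longrightarrow> (\<lambda>(x, x'). P h x a x') \<in> borel_measurable (M \<Otimes>\<^sub>M M)"
    and P_prob: "\<And>h x a. x \<in> space M \<Longrightarrow> a \<in> A \<Longrightarrow> (\<integral>\<^sup>+ x'. P h x a x' \<partial>M) = 1"
    and d0_meas: "d0 \<in> borel_measurable M"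
    and d0_prob: "(\<integral>\<^sup>+ x. d0 x \<partial>M) = 1"
    and pol_meas: "\<And>h a. a \<in> A \<Longrightarrow> (\<lambda>x. pol h x a) \<in> borel_measurable M"
    and pol_prob: "\<And>h x. x \<in> space M \<Longrightarrow> (\<Sum>a\<in>A. pol h x a) = 1"
    and polD_meas: "\<And>h a. a \<in> A \<Longrightarrow> (\<lambda>x. polD h x a) \<in> borel_measurable M"
    and polD_prob: "\<And>h x. x \<in> space M \<Longrightarrow> (\<Sum>a\<in>A. polD h x a) = 1"
    and dD_meas: "\<And>h. dD h \<in> borel_measurable M"
    and dD_prob: "\<And>h. (\<integral>\<^sup>+ x. dD h x \<partial>M) = 1"
    and Cx_pos: "\<And>h. Cx h > 0"
    and Ca_pos: "\<And>h. Ca h > 0"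
  shows
    "(\<forall>h < H. \<forall>x \<in> space M.
        clip_occ M A P d0 pol polD dD Cx Ca h x \<le> occ M A P d0 pol h x)
    \<and>
    (\<forall>h < H.
       (\<forall>h' < h. (\<forall>x \<in> space M. occ M A P d0 pol h' x \<le> ennreal (Cx h') * dD h' x)
               \<and> (\<forall>x \<in> space M. \<forall>a \<in> A. pol h' x a \<le> ennreal (Ca h') * polD h' x a))
       \<longrightarrow> (\<forall>x \<in> space M. clip_occ M A P d0 pol polD dD Cx Ca h x = occ M A P d0 pol h x))
    \<and>
    (\<forall>h < H. 1 \<le> h \<longrightarrow>
       L1dist M (clip_occ M A P d0 pol polD dD Cx Ca h) (occ M A P d0 pol h)
       \<le> L1dist M (clip_occ M A P d0 pol polD dD Cx Ca (h - 1)) (occ M A P d0 pol (h - 1))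
         + L1dist M (clip_occ M A P d0 pol polD dD Cx Ca (h - 1))
                    (\<lambda>x. min (clip_occ M A P d0 pol polD dD Cx Ca (h - 1) x)
                             (ennreal (Cx (h - 1)) * dD (h - 1) x))
         + L1dist M (Pop M A P (h - 1) (pol (h - 1)) (occ M A P d0 pol (h - 1)))
                    (Pop M A P (h - 1) (clip_pol pol polD Ca (h - 1)) (occ M A P d0 pol (h - 1))))"
proof -
  interpret clipped_occupancy M A P d0 pol polD dD Cx Ca
    by (intro clipped_occupancy.intro transition_density.intro clipped_occupancy_axioms.intro)
      (simp_all add: M P_meas P_prob d0_meas d0_prob pol_meas pol_prob polD_meas dD_meas)
  have step: "L1dist M (clipped h) (occupancy h)
      \<le> L1dist M (clipped (h - 1)) (occupancy (h - 1))
        + L1dist M (clipped (h - 1)) (clipped_state (h - 1))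
        + L1dist M (Pop M A P (h - 1) (pol (h - 1)) (occupancy (h - 1)))
                   (Pop M A P (h - 1) (clip_pol pol polD Ca (h - 1)) (occupancy (h - 1)))"
    if "1 \<le> h" for h
    using L1dist_clipped_Suc_le[of "h - 1"] that by simp
  show ?thesis
    by (intro conjI allI impI ballI clip_occ_le_occ clip_occ_eq_occ step) auto
qed

end
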